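(* The expected runtime (number of fitness evaluations) of both the (1+1)~IA$^{\text{hyp}}_{>}$ and the (1+1)~IA$^{\text{hyp}}_{\ge}$ to optimise $\textsc{OneMax}(x)=\sum_{i=1}^n x_i$ is $\Theta(n^2\log n)$.
   Context: The (1+1)~IA$^{\text{hyp}}$ keeps one bit string $x\in\{0,1\}^n$ (uniformly random initially); each iteration it creates $y$ by static hypermutation with FCM and sets $x:=y$ if $f(y)\ge f(x)$ (maximisation). Static hypermutation with FCM has a constant parameter $0<c\le1$ and mutation potential $M=cn$ (an integer): distinct bit positions are chosen uniformly at random without replacement and flipped one after another; each intermediate string is evaluated (one fitness evaluation each); the process stops at the first constructive mutation or after $M$ flips, and the last string is $y$. In (1+1)~IA$^{\text{hyp}}_{>}$ a string $z$ is constructive if $f(z)>f(x)$; in (1+1)~IA$^{\text{hyp}}_{\ge}$ if $f(z)\ge f(x)$. *)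

theory Defs
  imports "HOL-Probability.Probability"
begin

text \<open>Bit strings of length n are bool lists of length n (True = 1).\<close>

definition onemax :: "bool list \<Rightarrow> nat" where
  "onemax x = length (filter id x)"

definition flip_bits :: "nat list \<Rightarrow> bool list \<Rightarrow> bool list" where
  "flip_bits ps x = fold (\<lambda>i z. z[i := \<not> z ! i]) ps x"

definition positions :: "nat \<Rightarrow> nat \<Rightarrow> nat list set" where
  "positions n M = {ps. distinct ps \<and> length ps = M \<and> set ps \<subseteq> {0..<n}}"

text \<open>Static hypermutation with FCM.  constr a b says that a string of fitness a
  is constructive w.r.t. the parent of fitness b.  Result: (offspring y, number of
  fitness evaluations spent = number of intermediate strings evaluated).\<close>
definition hypermut ::
  "(nat \<Rightarrow> nat \<Rightarrow> bool) \<Rightarrow> (bool list \<Rightarrow> nat) \<Rightarrow> nat \<Rightarrow> bool list \<Rightarrow> (bool list \<times> nat) pmf" where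
  "hypermut constr f M x =
     map_pmf (\<lambda>ps.
        let z = (\<lambda>i. flip_bits (take i ps) x);
            found = {i \<in> {1..M}. constr (f (z i)) (f x)}
        in if found \<noteq> {} then (z (Min found), Min found) else (z M, M))
       (pmf_of_set (positions (length x) M))"

definition ia_step ::
  "(nat \<Rightarrow> nat \<Rightarrow> bool) \<Rightarrow> (bool list \<Rightarrow> nat) \<Rightarrow> nat \<Rightarrow> bool list \<Rightarrow> (bool list \<times> nat) pmf" where
  "ia_step constr f M x =
     map_pmf (\<lambda>(y, k). (if f y \<ge> f x then y else x, k)) (hypermut constr f M x)"

text \<open>State after t iterations together with the number of fitness evaluations
  used so far (1 for evaluating the uniformly random initial string); the process
  is stopped once the current string is optimal.\<close>
fun ia_run ::
  "(nat \<Rightarrow> nat \<Rightarrow> bool) \<Rightarrow> (bool list \<Rightarrow> nat) \<Rightarrow> (bool list \<Rightarrow> bool) \<Rightarrow> nat \<Rightarrow> nat \<Rightarrow> nat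
     \<Rightarrow> (bool list \<times> nat) pmf" where
  "ia_run constr f opt n M 0 =
     map_pmf (\<lambda>x. (x, 1)) (pmf_of_set {x. length x = n})"
| "ia_run constr f opt n M (Suc t) =
     bind_pmf (ia_run constr f opt n M t) (\<lambda>(x, c).
       if opt x then return_pmf (x, c)
       else map_pmf (\<lambda>(y, k). (y, c + k)) (ia_step constr f M x))"

text \<open>Expected runtime = expected number of fitness evaluations until the optimum is
  the current string (equivalently, first evaluated).  Evaluations are non-decreasing
  along the run, so by monotone convergence this supremum is E[T] (infinite if the
  optimum is not reached almost surely).\<close>
definition expected_runtime ::
  "(nat \<Rightarrow> nat \<Rightarrow> bool) \<Rightarrow> (bool list \<Rightarrow> nat) \<Rightarrow> (bool list \<Rightarrow> bool) \<Rightarrow> nat \<Rightarrow> nat \<Rightarrow> ennreal" where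
  "expected_runtime constr f opt n M =
     (SUP t. \<integral>\<^sup>+ s. ennreal (real (snd s)) \<partial>measure_pmf (ia_run constr f opt n M t))"

definition ert_IA_gt_onemax :: "nat \<Rightarrow> nat \<Rightarrow> ennreal" where
  "ert_IA_gt_onemax n M = expected_runtime (\<lambda>a b. a > b) onemax (\<lambda>x. x = replicate n True) n M"

definition ert_IA_ge_onemax :: "nat \<Rightarrow> nat \<Rightarrow> ennreal" where
  "ert_IA_ge_onemax n M = expected_runtime (\<lambda>a b. a \<ge> b) onemax (\<lambda>x. x = replicate n True) n M"

end

theory Submission
  imports Defs "HOL-Analysis.Harmonic_Numbers"
begin

text \<open>Both bounds are drift arguments on the number \<open>j\<close> of zero-bits, with the evaluations
  spent so far added to a potential.
  Upper bound: with probability \<open>j / n\<close> the first flip hits a zero-bit; then the first intermediate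
  string is constructive and \<open>j\<close> drops by one. An iteration costs at most \<open>n\<close> evaluations, so
  evaluations plus \<open>n\<^sup>2 H\<^sub>j\<close> form a supermartingale.
  Lower bound: an iteration stops before \<open>M\<close> evaluations only if the first flip hits a zero-bit
  or the walk of fitness differences of the later flips climbs back above the parent. Counting
  sequences of distinct positions, this has probability at most \<open>4 j / n\<close> when \<open>j \<le> n / 8\<close>,
  and \<open>j\<close> decreases by at most one per iteration, so evaluations plus
  \<open>(M n / 8) H\<^bsub>min j (n/8)\<^esub>\<close> form a submartingale; half of the initial strings
  have \<open>j \<ge> n / 8\<close>.\<close>

section \<open>Sequences of distinct positions\<close>

definition dlists :: "'a set \<Rightarrow> nat \<Rightarrow> 'a list set" where
  "dlists U K = {ps. distinct ps \<and> length ps = K \<and> set ps \<subseteq> U}"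

lemma finite_dlists: "finite U \<Longrightarrow> finite (dlists U K)"
  unfolding dlists_def
  by (rule finite_subset[OF _ finite_lists_length_eq[of U K]]) auto

lemma dlists_0 [simp]: "dlists U 0 = {[]}"
  by (auto simp: dlists_def)

lemma card_dlists:
  assumes "finite U"
  shows "card (dlists U K) = (if K \<le> card U then \<Prod>{card U - K + 1..card U} else 0)"
proof (cases "K \<le> card U")
  case True
  then show ?thesis
    using card_lists_distinct_length_eq[OF assms True] unfolding dlists_def
    by (simp add: conj_commute conj_left_commute)
next
  case False
  have "dlists U K = {}"
  proof -
    have "K \<le> card U" if "ps \<in> dlists U K" for ps
      using that assms card_mono[of U "set ps"] distinct_card[of ps] by (auto simp: dlists_def)
    then show ?thesis using False by blast
  qed
  then show ?thesis using False by simp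
qed

lemma card_dlists_Suc:
  assumes "finite U" "a \<in> U"
  shows "card (dlists U (Suc K)) = card U * card (dlists (U - {a}) K)"
proof -
  obtain v where v: "card U = Suc v"
    using assms by (metis card_Suc_Diff1)
  then have "card (U - {a}) = v" using assms by simp
  moreover have "\<Prod>{Suc v - Suc K + 1..Suc v} = Suc v * \<Prod>{v - K + 1..v}" if "K \<le> v"
    using that by (simp add: prod.cl_ivl_Suc Suc_diff_le)
  ultimately show ?thesis
    using v assms by (simp add: card_dlists)
qed

lemma real_card_dlists_Diff_singleton:
  assumes "finite U" "a \<in> U"
  shows "real (card (dlists (U - {a}) K)) = real (card (dlists U (Suc K))) / real (card U)"
proof -
  have "card U > 0" using assms card_gt_0_iff by blast
  then show ?thesis using card_dlists_Suc[OF assms, of K] by simp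
qed

lemma card_dlists_Suc_filter:
  assumes "finite U"
  shows "card {ps \<in> dlists U (Suc K). P ps} = (\<Sum>a\<in>U. card {rs \<in> dlists (U - {a}) K. P (a # rs)})"
proof -
  have "{ps \<in> dlists U (Suc K). P ps} = (\<Union>a\<in>U. Cons a ` {rs \<in> dlists (U - {a}) K. P (a # rs)})"
    unfolding dlists_def by (auto simp: length_Suc_conv) (fastforce simp: image_iff)
  also have "card \<dots> = (\<Sum>a\<in>U. card (Cons a ` {rs \<in> dlists (U - {a}) K. P (a # rs)}))"
    using assms by (intro card_UN_disjoint) (auto intro!: finite_imageI simp: finite_dlists)
  also have "\<dots> = (\<Sum>a\<in>U. card {rs \<in> dlists (U - {a}) K. P (a # rs)})"
    by (intro sum.cong refl card_image) auto
  finally show ?thesis .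
qed

lemma card_dlists_hd_mem:
  assumes "finite U" "Z \<subseteq> U" "U \<noteq> {}"
  shows "real (card {ps \<in> dlists U (Suc K). hd ps \<in> Z})
           = real (card Z) / real (card U) * real (card (dlists U (Suc K)))"
proof -
  have "real (card {ps \<in> dlists U (Suc K). hd ps \<in> Z})
      = (\<Sum>a\<in>U. real (card {rs \<in> dlists (U - {a}) K. a \<in> Z}))"
    unfolding card_dlists_Suc_filter[OF assms(1)] of_nat_sum by simp
  also have "\<dots> = (\<Sum>a\<in>U. if a \<in> Z then real (card (dlists U (Suc K))) / real (card U) else 0)"
    using assms(1) by (intro sum.cong) (auto simp: real_card_dlists_Diff_singleton)
  also have "\<dots> = real (card Z) / real (card U) * real (card (dlists U (Suc K)))"
    using assms by (simp add: sum.If_cases Int_absorb1)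
  finally show ?thesis .
qed

section \<open>A counting bound for a random walk\<close>

text \<open>\<open>d\<close> is the fitness deficit of the current prefix of flips relative to the parent;
  flipping a position of \<open>Z\<close> (a zero-bit) decreases it, any other flip increases it.\<close>
fun reaches_zero :: "'a set \<Rightarrow> nat \<Rightarrow> 'a list \<Rightarrow> bool" where
  "reaches_zero Z d [] \<longleftrightarrow> d = 0"
| "reaches_zero Z d (a # ps) \<longleftrightarrow> d = 0 \<or> reaches_zero Z (if a \<in> Z then d - 1 else d + 1) ps"

lemma reaches_zero_0 [simp]: "reaches_zero Z 0 ps"
  by (cases ps) auto

lemma reaches_zero_le_card:
  "reaches_zero Z d ps \<Longrightarrow> distinct ps \<Longrightarrow> d \<le> card (set ps \<inter> Z)"
proof (induction ps arbitrary: d)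
  case (Cons a ps)
  show ?case
  proof (cases "d = 0")
    case False
    then have "(if a \<in> Z then d - 1 else d + 1) \<le> card (set ps \<inter> Z)"
      using Cons by simp
    moreover have "card (set ps \<inter> Z) \<le> card (set (a # ps) \<inter> Z)"
      by (intro card_mono) auto
    moreover have "a \<in> Z \<Longrightarrow> card (set (a # ps) \<inter> Z) = Suc (card (set ps \<inter> Z))"
      using Cons.prems by (simp add: insert_absorb)
    ultimately show ?thesis by (cases "a \<in> Z") auto
  qed simp
qed simp

lemma dlists_reaches_zero_empty:
  assumes "finite U" "card (U \<inter> Z) < d"
  shows "{ps \<in> dlists U K. reaches_zero Z d ps} = {}"
proof -
  have "card (set ps \<inter> Z) \<le> card (U \<inter> Z)" if "ps \<in> dlists U K" for ps
    using that assms(1) by (intro card_mono) (auto simp: dlists_def)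
  then show ?thesis
    using reaches_zero_le_card assms(2) by (fastforce simp: dlists_def)
qed

lemma power_ratio_pred_le:
  fixes z u e :: nat
  assumes "1 \<le> z" "z \<le> u"
  shows "real z * (2 * real (z - 1) / real (u - 1)) ^ e \<le> real u / 2 * (2 * real z / real u) ^ Suc e"
proof -
  have "real (z - 1) / real (u - 1) \<le> real z / real u"
  proof (cases "u = 1")
    case False
    then have "(real z - 1) * real u \<le> real z * (real u - 1)" "real u - 1 > 0"
      using assms by (simp_all add: algebra_simps)
    then show ?thesis using assms by (simp add: of_nat_diff divide_simps)
  qed simp
  then have "(2 * real (z - 1) / real (u - 1)) ^ e \<le> (2 * real z / real u) ^ e"
    by (intro power_mono) (auto simp: divide_simps)
  then have "real z * (2 * real (z - 1) / real (u - 1)) ^ e \<le> real z * (2 * real z / real u) ^ e"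
    by (intro mult_left_mono) auto
  also have "\<dots> = real u / 2 * (2 * real z / real u) ^ Suc e"
    using assms by simp
  finally show ?thesis .
qed

text \<open>Bernoulli's inequality keeps the factor \<open>(u / (u - 1)) ^ d\<close> below \<open>5/4\<close>.\<close>
lemma power_ratio_shift_le:
  fixes z u d :: nat
  assumes "5 * z + 2 \<le> u" "Suc d \<le> z"
  shows "real u * (2 * real z / real (u - 1)) ^ Suc d \<le> real u / 2 * (2 * real z / real u) ^ d"
proof -
  have u: "real u \<ge> 7" using assms by linarith
  define q where "q = 2 * real z / real u"
  define r where "r = 2 * real z / (real u - 1)"
  have "4 / 5 \<le> 1 + real d * (- 1 / real u)"
    using assms u by (simp add: divide_simps)
  also have "\<dots> \<le> (1 + (- 1 / real u)) ^ d"
    using u by (intro Bernoulli_inequality) (auto simp: divide_simps)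
  also have "1 + (- 1 / real u) = (real u - 1) / real u"
    using u by (simp add: divide_simps)
  finally have "4 / 5 \<le> ((real u - 1) / real u) ^ d" .
  moreover have "(real u / (real u - 1)) ^ d = 1 / ((real u - 1) / real u) ^ d"
    by (simp add: power_divide)
  ultimately have bernoulli: "(real u / (real u - 1)) ^ d \<le> 5 / 4"
    using divide_left_mono[of "4 / 5" _ 1] by fastforce
  have rq: "r = q * (real u / (real u - 1))"
    unfolding q_def r_def using u by (simp add: divide_simps)
  have "r ^ Suc d = r * (q ^ d * (real u / (real u - 1)) ^ d)"
    unfolding rq power_Suc power_mult_distrib by simp
  moreover have "r \<le> 2 / 5" "0 \<le> r" "0 \<le> q"
    unfolding r_def q_def using assms u by (simp_all add: divide_simps)
  ultimately have "r ^ Suc d \<le> (2 / 5) * (q ^ d * (5 / 4))"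
    using u bernoulli by (simp only:) (intro mult_mono, auto)
  then have "real u * r ^ Suc d \<le> real u * (q ^ d / 2)"
    by (intro mult_left_mono) auto
  then show ?thesis
    unfolding q_def r_def using assms by (simp add: of_nat_diff)
qed

text \<open>The induction step of \<open>card_reaches_zero_le\<close> below. Its side condition survives the
  recursion and yields \<open>5 z + 2 \<le> u\<close> whenever a step away from zero can still be undone.\<close>
context
  fixes Z :: "'a set" and K :: nat
  assumes reaches_zero_bound: "\<And>U d. finite U \<Longrightarrow> 7 * card (U \<inter> Z) \<le> card U + 2 * d \<Longrightarrow>
      real (card {ps \<in> dlists U K. reaches_zero Z d ps})
        \<le> (2 * real (card (U \<inter> Z)) / real (card U)) ^ d * real (card (dlists U K))"
begin

lemma card_reaches_zero_Cons_mem: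
  assumes U: "finite U" "7 * card (U \<inter> Z) \<le> card U + 2 * Suc e" and a: "a \<in> U" "a \<in> Z"
  shows "real (card {rs \<in> dlists (U - {a}) K. reaches_zero Z (Suc e) (a # rs)})
     \<le> (2 * real (card (U \<inter> Z) - 1) / real (card U - 1)) ^ e * real (card (dlists (U - {a}) K))"
proof -
  have "(U - {a}) \<inter> Z = (U \<inter> Z) - {a}"
    by auto
  then have "card ((U - {a}) \<inter> Z) = card (U \<inter> Z) - 1"
    using U a by (simp add: card_Diff_singleton)
  moreover have "card (U - {a}) = card U - 1"
    using U a by (simp add: card_Diff_singleton)
  moreover have "1 \<le> card (U \<inter> Z)"
    using U a by (metis IntI Suc_leI card_gt_0_iff empty_iff finite_Int One_nat_def)
  ultimately show ?thesis
    using reaches_zero_bound[of "U - {a}" e] U a by simp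
qed

lemma card_reaches_zero_Cons_not_mem:
  assumes U: "finite U" "7 * card (U \<inter> Z) \<le> card U + 2 * Suc e" and a: "a \<in> U" "a \<notin> Z"
  shows "real (card {rs \<in> dlists (U - {a}) K. reaches_zero Z (Suc e) (a # rs)})
     \<le> (if Suc (Suc e) \<le> card (U \<inter> Z)
         then (2 * real (card (U \<inter> Z)) / real (card U - 1)) ^ Suc (Suc e) else 0)
        * real (card (dlists (U - {a}) K))"
proof -
  have step: "reaches_zero Z (Suc e) (a # rs) = reaches_zero Z (Suc (Suc e)) rs" for rs
    using a by simp
  have Int: "(U - {a}) \<inter> Z = U \<inter> Z"
    using a by auto
  show ?thesis
  proof (cases "Suc (Suc e) \<le> card (U \<inter> Z)")
    case True
    have "card (U - {a}) = card U - 1"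
      using U a by (simp add: card_Diff_singleton)
    then show ?thesis
      using reaches_zero_bound[of "U - {a}" "Suc (Suc e)"] True U unfolding step Int by simp
  next
    case False
    then have empty: "{rs \<in> dlists (U - {a}) K. reaches_zero Z (Suc (Suc e)) rs} = {}"
      using U Int by (intro dlists_reaches_zero_empty) auto
    show ?thesis
      unfolding step empty using False by simp
  qed
qed

lemma card_reaches_zero_Suc:
  assumes U: "finite U" "U \<noteq> {}" "7 * card (U \<inter> Z) \<le> card U + 2 * Suc e"
  shows "real (card {ps \<in> dlists U (Suc K). reaches_zero Z (Suc e) ps})
           \<le> (2 * real (card (U \<inter> Z)) / real (card U)) ^ Suc e * real (card (dlists U (Suc K)))"
proof -
  define u where "u = card U"
  define z where "z = card (U \<inter> Z)"
  define D where "D = real (card (dlists U (Suc K)))"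
  define T1 where "T1 = (2 * real (z - 1) / real (u - 1)) ^ e * (D / real u)"
  define T2 where "T2 = (if Suc (Suc e) \<le> z then (2 * real z / real (u - 1)) ^ Suc (Suc e) else 0)
    * (D / real u)"
  have u: "1 \<le> u" "z \<le> u"
    using U unfolding u_def z_def by (auto simp: Suc_leI card_gt_0_iff intro: card_mono)
  have "real (card {ps \<in> dlists U (Suc K). reaches_zero Z (Suc e) ps})
      = (\<Sum>a\<in>U. real (card {rs \<in> dlists (U - {a}) K. reaches_zero Z (Suc e) (a # rs)}))"
    unfolding card_dlists_Suc_filter[OF U(1)] of_nat_sum ..
  also have "\<dots> \<le> (\<Sum>a\<in>U. if a \<in> Z then T1 else T2)"
    using card_reaches_zero_Cons_mem[OF U(1,3)] card_reaches_zero_Cons_not_mem[OF U(1,3)]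
    unfolding T1_def T2_def u_def z_def D_def
    by (intro sum_mono) (simp add: real_card_dlists_Diff_singleton[OF U(1)])
  also have "\<dots> = real z * T1 + real (u - z) * T2"
    using U(1) unfolding u_def z_def
    by (simp add: sum.If_cases Diff_eq[symmetric] card_Diff_subset_Int)
  also have "\<dots> \<le> (real u / 2 * (2 * real z / real u) ^ Suc e
                 + real u / 2 * (2 * real z / real u) ^ Suc e) * (D / real u)"
  proof -
    have "real z * (2 * real (z - 1) / real (u - 1)) ^ e \<le> real u / 2 * (2 * real z / real u) ^ Suc e"
      using power_ratio_pred_le[of z u e] u by (cases "z = 0") auto
    moreover have "real (u - z) * (2 * real z / real (u - 1)) ^ Suc (Suc e)
        \<le> real u / 2 * (2 * real z / real u) ^ Suc e" if "Suc (Suc e) \<le> z"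
    proof -
      have "5 * z + 2 \<le> u"
        using U(3) that unfolding u_def z_def by simp
      then have "real u * (2 * real z / real (u - 1)) ^ Suc (Suc e)
          \<le> real u / 2 * (2 * real z / real u) ^ Suc e"
        using power_ratio_shift_le that by blast
      moreover have "real (u - z) * (2 * real z / real (u - 1)) ^ Suc (Suc e)
          \<le> real u * (2 * real z / real (u - 1)) ^ Suc (Suc e)"
        by (intro mult_right_mono) auto
      ultimately show ?thesis by linarith
    qed
    ultimately show ?thesis
      unfolding T1_def T2_def D_def distrib_right mult.assoc[symmetric]
      by (intro add_mono mult_right_mono) auto
  qed
  also have "\<dots> = (2 * real z / real u) ^ Suc e * D"
    using u by simp
  finally show ?thesis
    unfolding D_def u_def z_def .
qed

end

lemma card_reaches_zero_le:
  assumes "finite U" "7 * card (U \<inter> Z) \<le> card U + 2 * d"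
  shows "real (card {ps \<in> dlists U K. reaches_zero Z d ps})
           \<le> (2 * real (card (U \<inter> Z)) / real (card U)) ^ d * real (card (dlists U K))"
  using assms
proof (induction K arbitrary: U d)
  case 0
  have "{ps \<in> dlists U 0. reaches_zero Z d ps} = (if d = 0 then {[]} else {})"
    by auto
  then show ?case by simp
next
  case (Suc K)
  show ?case
  proof (cases d)
    case 0
    then show ?thesis by simp
  next
    case (Suc e)
    show ?thesis
    proof (cases "U = {}")
      case True
      then have "dlists U (Suc K) = {}"
        by (auto simp: dlists_def)
      then show ?thesis by simp
    next
      case False
      then show ?thesis
        using card_reaches_zero_Suc[OF Suc.IH] Suc.prems \<open>d = Suc e\<close> by blast
    qed
  qed
qed

lemma card_dlists_hd_or_reaches_zero_le:
  assumes U: "finite U" "Z \<subseteq> U" "3 \<le> card U" and Z: "7 * card Z \<le> card U + 1"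
  shows "real (card {ps \<in> dlists U (Suc K). hd ps \<in> Z \<or> reaches_zero Z 1 (tl ps)})
           \<le> 4 * real (card Z) / real (card U) * real (card (dlists U (Suc K)))"
proof -
  define D where "D = real (card (dlists U (Suc K)))"
  define n where "n = card U"
  define j where "j = card Z"
  have n: "3 \<le> n" "j \<le> n"
    using U card_mono unfolding n_def j_def by auto
  have bound: "real (card {rs \<in> dlists (U - {a}) K. hd (a # rs) \<in> Z \<or> reaches_zero Z 1 (tl (a # rs))})
       \<le> (if a \<in> Z then D / real n else 2 * real j / real (n - 1) * (D / real n))" if a: "a \<in> U" for a
  proof (cases "a \<in> Z")
    case True
    have "card {rs \<in> dlists (U - {a}) K. hd (a # rs) \<in> Z \<or> reaches_zero Z 1 (tl (a # rs))}
        \<le> card (dlists (U - {a}) K)"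
      using U by (intro card_mono) (auto simp: finite_dlists)
    then show ?thesis
      using True real_card_dlists_Diff_singleton[OF U(1) a] unfolding D_def n_def by simp
  next
    case False
    then have "(U - {a}) \<inter> Z = Z" "card (U - {a}) = n - 1"
      using U a unfolding n_def by (auto simp: card_Diff_singleton)
    then show ?thesis
      using False card_reaches_zero_le[of "U - {a}" Z 1 K] U Z n
        real_card_dlists_Diff_singleton[OF U(1) a]
      unfolding D_def n_def j_def by simp
  qed
  have "real (card {ps \<in> dlists U (Suc K). hd ps \<in> Z \<or> reaches_zero Z 1 (tl ps)})
      = (\<Sum>a\<in>U. real (card {rs \<in> dlists (U - {a}) K. hd (a # rs) \<in> Z \<or> reaches_zero Z 1 (tl (a # rs))}))"
    unfolding card_dlists_Suc_filter[OF U(1)] of_nat_sum ..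
  also have "\<dots> \<le> (\<Sum>a\<in>U. if a \<in> Z then D / real n else 2 * real j / real (n - 1) * (D / real n))"
    using bound by (intro sum_mono) auto
  also have "\<dots> = (real j + real (n - j) * (2 * real j / real (n - 1))) * (D / real n)"
    using U unfolding j_def n_def
    by (simp add: sum.If_cases Int_absorb1 Diff_eq[symmetric] card_Diff_subset finite_subset algebra_simps)
  also have "\<dots> \<le> (real j + 3 * real j) * (D / real n)"
  proof -
    have "real (n - j) * (2 * real j / real (n - 1)) \<le> real n * (2 * real j / real (n - 1))"
      by (intro mult_right_mono) auto
    also have "\<dots> \<le> 3 * real j"
      using n by (simp add: divide_simps of_nat_diff) (simp add: algebra_simps mult_left_mono)
    finally show ?thesis
      unfolding D_def by (intro mult_right_mono) auto
  qed
  finally show ?thesis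
    unfolding D_def n_def j_def by simp
qed

section \<open>Flipping bits and OneMax\<close>

definition flip_gain :: "bool list \<Rightarrow> nat list \<Rightarrow> int" where
  "flip_gain x ps = (\<Sum>p\<leftarrow>ps. if x ! p then -1 else 1)"

lemma flip_gain_Nil [simp]: "flip_gain x [] = 0"
  by (simp add: flip_gain_def)

lemma flip_gain_Cons [simp]: "flip_gain x (a # ps) = (if x ! a then -1 else 1) + flip_gain x ps"
  by (simp add: flip_gain_def)

lemma flip_bits_Nil [simp]: "flip_bits [] x = x"
  by (simp add: flip_bits_def)

lemma flip_bits_Cons: "flip_bits (a # ps) x = flip_bits ps (x[a := \<not> x ! a])"
  by (simp add: flip_bits_def)

lemma flip_bits_snoc: "flip_bits (ps @ [a]) x = (flip_bits ps x)[a := \<not> flip_bits ps x ! a]"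
  by (simp add: flip_bits_def)

lemma length_flip_bits [simp]: "length (flip_bits ps x) = length x"
  by (induction ps arbitrary: x) (auto simp: flip_bits_Cons)

lemma onemax_flip_bit:
  assumes "i < length x"
  shows "int (onemax (x[i := \<not> x ! i])) = int (onemax x) + (if x ! i then -1 else 1)"
proof -
  have x: "x = take i x @ [x ! i] @ drop (Suc i) x"
    using assms by (simp add: Cons_nth_drop_Suc)
  have "onemax x = length (filter id (take i x)) + (if x ! i then 1 else 0)
      + length (filter id (drop (Suc i) x))"
    unfolding onemax_def by (subst x) simp
  moreover have "onemax (x[i := \<not> x ! i]) = length (filter id (take i x)) + (if x ! i then 0 else 1)
      + length (filter id (drop (Suc i) x))"
    using assms unfolding onemax_def by (simp add: upd_conv_take_nth_drop)
  ultimately show ?thesis by auto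
qed

lemma onemax_flip_bits:
  assumes "distinct ps" "set ps \<subseteq> {..<length x}"
  shows "int (onemax (flip_bits ps x)) = int (onemax x) + flip_gain x ps"
  using assms
proof (induction ps arbitrary: x)
  case (Cons a ps)
  have a: "a < length x" "a \<notin> set ps"
    using Cons.prems by auto
  then have "flip_gain (x[a := \<not> x ! a]) ps = flip_gain x ps"
    unfolding flip_gain_def by (intro arg_cong[where f = sum_list] map_cong) (auto simp: nth_list_update)
  then show ?case
    unfolding flip_bits_Cons using Cons.IH[of "x[a := \<not> x ! a]"] Cons.prems onemax_flip_bit[OF a(1)]
    by simp
qed simp

lemma onemax_flip_bits_take_Suc_le:
  assumes "i < length ps" "set ps \<subseteq> {..<length x}"
  shows "onemax (flip_bits (take (Suc i) ps) x) \<le> onemax (flip_bits (take i ps) x) + 1"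
proof -
  have "ps ! i < length (flip_bits (take i ps) x)"
    using assms nth_mem by fastforce
  from onemax_flip_bit[OF this] show ?thesis
    using assms by (simp add: take_Suc_conv_app_nth flip_bits_snoc split: if_splits)
qed

definition zero_bits :: "bool list \<Rightarrow> nat set" where
  "zero_bits x = {p. p < length x \<and> \<not> x ! p}"

lemma zero_bits_subset: "zero_bits x \<subseteq> {0..<length x}"
  unfolding zero_bits_def by auto

lemma onemax_le_length: "onemax x \<le> length x"
  unfolding onemax_def by simp

lemma card_zero_bits: "card (zero_bits x) = length x - onemax x"
proof -
  have "{0..<length x} = zero_bits x \<union> {p. p < length x \<and> x ! p}"
    "zero_bits x \<inter> {p. p < length x \<and> x ! p} = {}"
    unfolding zero_bits_def by auto
  then have "length x = card (zero_bits x) + card {p. p < length x \<and> x ! p}"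
    by (metis card_Un_disjoint card_atLeastLessThan diff_zero finite_Un finite_atLeastLessThan)
  then show ?thesis
    unfolding onemax_def by (simp add: length_filter_conv_card)
qed

lemma onemax_eq_length_iff: "length x = n \<Longrightarrow> x = replicate n True \<longleftrightarrow> onemax x = n"
proof -
  assume "length x = n"
  then have "x = replicate n True \<longleftrightarrow> zero_bits x = {}"
    unfolding zero_bits_def by (auto simp: list_eq_iff_nth_eq)
  also have "\<dots> \<longleftrightarrow> card (zero_bits x) = 0"
    using zero_bits_subset finite_subset by (metis card_eq_0_iff finite_atLeastLessThan)
  finally show ?thesis
    using card_zero_bits[of x] onemax_le_length[of x] \<open>length x = n\<close> by auto
qed

lemma onemax_map_Not: "onemax (map Not x) = length x - onemax x"
proof -
  have "length (filter id (map Not x)) = length (filter Not x)"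
    by (induction x) auto
  then show ?thesis
    using sum_length_filter_compl[of id x] unfolding onemax_def by simp
qed

lemma reaches_zero_of_flip_gain:
  assumes "r \<le> length ps" "int d \<le> flip_gain x (take r ps)" "set ps \<subseteq> {..<length x}"
  shows "reaches_zero (zero_bits x) d ps"
  using assms
proof (induction ps arbitrary: d r)
  case (Cons a ps)
  show ?case
  proof (cases r)
    case (Suc r')
    have "a < length x"
      using Cons.prems by auto
    then have "reaches_zero (zero_bits x) (if a \<in> zero_bits x then d - 1 else d + 1) ps \<or> d = 0"
      using Cons.prems Suc by (intro disjCI Cons.IH[of r']) (auto simp: zero_bits_def of_nat_diff)
    then show ?thesis by auto
  qed (use Cons.prems in simp)
qed simp

section \<open>One iteration of the (1+1) IA on OneMax\<close>

lemma positions_eq_dlists: "positions n M = dlists {0..<n} M"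
  unfolding positions_def dlists_def by simp

lemma dlists_atLeastLessThan_ne: "M \<le> n \<Longrightarrow> dlists {0..<n} M \<noteq> {}"
proof -
  assume "M \<le> n"
  then have "[0..<M] \<in> dlists {0..<n} M"
    by (auto simp: dlists_def)
  then show ?thesis by blast
qed

definition hypermut_outcome :: "(nat \<Rightarrow> nat \<Rightarrow> bool) \<Rightarrow> nat \<Rightarrow> bool list \<Rightarrow> nat list \<Rightarrow> bool list \<times> nat" where
  "hypermut_outcome constr M x ps =
     (let z = (\<lambda>i. flip_bits (take i ps) x);
          found = {i \<in> {1..M}. constr (onemax (z i)) (onemax x)}
      in if found \<noteq> {} then (z (Min found), Min found) else (z M, M))"

definition ia_step_outcome :: "(nat \<Rightarrow> nat \<Rightarrow> bool) \<Rightarrow> nat \<Rightarrow> bool list \<Rightarrow> nat list \<Rightarrow> bool list \<times> nat" where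
  "ia_step_outcome constr M x ps =
     (\<lambda>(y, k). (if onemax y \<ge> onemax x then y else x, k)) (hypermut_outcome constr M x ps)"

lemma ia_step_onemax_eq:
  "ia_step constr onemax M x = map_pmf (ia_step_outcome constr M x) (pmf_of_set (dlists {0..<length x} M))"
  unfolding ia_step_def hypermut_def ia_step_outcome_def hypermut_outcome_def positions_eq_dlists
  by (simp add: map_pmf_comp)

definition admissible_constr :: "(nat \<Rightarrow> nat \<Rightarrow> bool) \<Rightarrow> bool" where
  "admissible_constr constr \<longleftrightarrow>
     (\<forall>b. constr (Suc b) b) \<and> (\<forall>a b. a < b \<longrightarrow> \<not> constr a b) \<and> (\<forall>a b. \<not> constr a b \<longrightarrow> a \<le> b)"

lemma admissible_constr_greater: "admissible_constr (\<lambda>a b. a > b)"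
  by (auto simp: admissible_constr_def)

lemma admissible_constr_greater_eq: "admissible_constr (\<lambda>a b. a \<ge> b)"
  by (auto simp: admissible_constr_def)

locale flip_sequence =
  fixes constr :: "nat \<Rightarrow> nat \<Rightarrow> bool" and M :: nat and x :: "bool list" and ps :: "nat list"
  assumes admissible: "admissible_constr constr"
    and ps: "ps \<in> dlists {0..<length x} M"
    and M_pos: "1 \<le> M"
begin

abbreviation prefix_flip :: "nat \<Rightarrow> bool list" where
  "prefix_flip i \<equiv> flip_bits (take i ps) x"

definition found :: "nat set" where
  "found = {i \<in> {1..M}. constr (onemax (prefix_flip i)) (onemax x)}"

lemma length_ps: "length ps = M"
  and set_ps: "set ps \<subseteq> {..<length x}"
  using ps by (auto simp: dlists_def)

lemma hypermut_outcome_eq: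
  "hypermut_outcome constr M x ps = (if found \<noteq> {} then (prefix_flip (Min found), Min found) else (prefix_flip M, M))"
  unfolding hypermut_outcome_def found_def Let_def by simp

lemma onemax_prefix_flip: "int (onemax (prefix_flip r)) = int (onemax x) + flip_gain x (take r ps)"
  using ps set_ps by (intro onemax_flip_bits) (auto simp: dlists_def dest: in_set_takeD)

lemma found_subset: "found \<subseteq> {1..M}"
  unfolding found_def by auto

lemma finite_found: "finite found"
  using found_subset by (rule finite_subset) simp

lemma Min_found_mem: "found \<noteq> {} \<Longrightarrow> Min found \<in> found"
  using finite_found by (rule Min_in)

lemma Min_found_range: "found \<noteq> {} \<Longrightarrow> 1 \<le> Min found \<and> Min found \<le> M"
  using Min_found_mem found_subset by fastforce

lemma evals_ia_step_outcome: "1 \<le> snd (ia_step_outcome constr M x ps) \<and> snd (ia_step_outcome constr M x ps) \<le> M"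
  using M_pos Min_found_range
  unfolding ia_step_outcome_def hypermut_outcome_eq by (auto split: prod.splits)

lemma length_ia_step_outcome: "length (fst (ia_step_outcome constr M x ps)) = length x"
  unfolding ia_step_outcome_def hypermut_outcome_eq by (auto split: prod.splits)

lemma onemax_prefix_flip_le_if_not_found:
  "i \<in> {1..M} \<Longrightarrow> i \<notin> found \<Longrightarrow> onemax (prefix_flip i) \<le> onemax x"
  using admissible unfolding found_def admissible_constr_def by auto

text \<open>The string preceding the first constructive one was not constructive, and a single flip
  changes the fitness by at most one.\<close>
lemma onemax_hypermut_outcome_le: "onemax (fst (hypermut_outcome constr M x ps)) \<le> onemax x + 1"
proof (cases "found = {}")
  case True
  then show ?thesis
    using onemax_prefix_flip_le_if_not_found[of M] M_pos unfolding hypermut_outcome_eq by simp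
next
  case False
  define m where "m = Min found"
  have m: "1 \<le> m" "m \<le> M"
    using Min_found_range[OF False] unfolding m_def by auto
  have "onemax (prefix_flip (m - 1)) \<le> onemax x"
  proof (cases "m = 1")
    case False
    have "m - 1 \<notin> found"
      using Min_le[OF finite_found, of "m - 1"] m(1) unfolding m_def by fastforce
    then show ?thesis
      using False m by (intro onemax_prefix_flip_le_if_not_found) auto
  qed simp
  moreover have "onemax (prefix_flip (Suc (m - 1))) \<le> onemax (prefix_flip (m - 1)) + 1"
    using m length_ps set_ps by (intro onemax_flip_bits_take_Suc_le) auto
  ultimately show ?thesis
    unfolding hypermut_outcome_eq m_def[symmetric] using False m(1) by simp
qed

lemma onemax_ia_step_outcome:
  "onemax x \<le> onemax (fst (ia_step_outcome constr M x ps))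
   \<and> onemax (fst (ia_step_outcome constr M x ps)) \<le> onemax x + 1"
  using onemax_hypermut_outcome_le unfolding ia_step_outcome_def by (auto split: prod.splits)

lemma onemax_ia_step_outcome_hd_zero:
  assumes "\<not> x ! hd ps"
  shows "onemax (fst (ia_step_outcome constr M x ps)) = onemax x + 1"
proof -
  obtain a rest where ps_Cons: "ps = a # rest"
    using length_ps M_pos by (cases ps) auto
  then have improved: "onemax (prefix_flip 1) = Suc (onemax x)"
    using onemax_prefix_flip[of 1] assms by simp
  then have "1 \<in> found"
    unfolding found_def using admissible M_pos by (auto simp: admissible_constr_def)
  then have "Min found = 1"
    using Min_found_range[of] finite_found by (intro antisym Min_le) blast+
  then show ?thesis
    using \<open>1 \<in> found\<close> improved unfolding ia_step_outcome_def hypermut_outcome_eq by auto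
qed

text \<open>If the first flip hits a one-bit and no later prefix regains the loss, no intermediate
  string is as fit as \<open>x\<close>: all \<open>M\<close> evaluations are spent and \<open>x\<close> is kept.\<close>
lemma ia_step_outcome_no_progress:
  assumes "\<not> (hd ps \<in> zero_bits x \<or> reaches_zero (zero_bits x) 1 (tl ps))"
  shows "ia_step_outcome constr M x ps = (x, M)"
proof -
  obtain a rest where ps_Cons: "ps = a # rest"
    using length_ps M_pos by (cases ps) auto
  have a: "a < length x" "x ! a"
    using set_ps assms ps_Cons by (auto simp: zero_bits_def)
  have worse: "onemax (prefix_flip r) < onemax x" if r: "r \<in> {1..M}" for r
  proof (rule ccontr)
    assume "\<not> onemax (prefix_flip r) < onemax x"
    moreover obtain r' where "r = Suc r'"
      using r by (cases r) auto
    ultimately have "int 1 \<le> flip_gain x (take r' rest)" "r' \<le> length rest"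
      using onemax_prefix_flip[of r] ps_Cons a r length_ps by auto
    then have "reaches_zero (zero_bits x) 1 rest"
      using set_ps ps_Cons by (intro reaches_zero_of_flip_gain) auto
    then show False
      using assms ps_Cons by simp
  qed
  then have "found = {}"
    using admissible unfolding found_def admissible_constr_def by auto
  then show ?thesis
    using worse[of M] M_pos unfolding ia_step_outcome_def hypermut_outcome_eq by simp
qed

end

section \<open>Potentials and drift\<close>

definition upper_potential :: "nat \<Rightarrow> nat \<Rightarrow> real" where
  "upper_potential n j = real n ^ 2 * harm j"

text \<open>Beyond \<open>n / 8\<close> zero-bits the lower potential is flat, so that the drift bound only has to
  hold where the improvement probability is small.\<close>
definition lower_potential :: "nat \<Rightarrow> nat \<Rightarrow> nat \<Rightarrow> real" where
  "lower_potential n M j = real M * real n / 8 * harm (min j (n div 8))"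

lemma upper_potential_nonneg: "0 \<le> upper_potential n j"
  unfolding upper_potential_def by (simp add: harm_nonneg)

lemma lower_potential_nonneg: "0 \<le> lower_potential n M j"
  unfolding lower_potential_def by (simp add: harm_nonneg)

lemma upper_potential_mono: "i \<le> j \<Longrightarrow> upper_potential n i \<le> upper_potential n j"
  unfolding upper_potential_def by (intro mult_left_mono harm_mono) auto

lemma lower_potential_mono: "i \<le> j \<Longrightarrow> lower_potential n M i \<le> lower_potential n M j"
  unfolding lower_potential_def by (intro mult_left_mono harm_mono) auto

lemma harm_pred: "1 \<le> j \<Longrightarrow> harm j = harm (j - 1) + 1 / (real j :: real)"
  by (cases j) (simp_all add: harm_Suc inverse_eq_divide)

lemma upper_potential_pred:
  "1 \<le> j \<Longrightarrow> upper_potential n j = upper_potential n (j - 1) + real n ^ 2 / real j"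
  unfolding upper_potential_def by (simp add: harm_pred algebra_simps)

lemma lower_potential_pred:
  "1 \<le> j \<Longrightarrow> j \<le> n div 8 \<Longrightarrow> lower_potential n M j = lower_potential n M (j - 1) + real M * real n / 8 / real j"
  unfolding lower_potential_def by (simp add: harm_pred algebra_simps)

context flip_sequence
begin

lemma upper_potential_ia_step_outcome:
  assumes "length x = n" "n - onemax x = j" "1 \<le> j" "M \<le> n"
  shows "real (snd (ia_step_outcome constr M x ps)) + upper_potential n (n - onemax (fst (ia_step_outcome constr M x ps)))
    \<le> real n + upper_potential n j - (if hd ps \<in> zero_bits x then real n ^ 2 / real j else 0)"
proof -
  let ?y = "fst (ia_step_outcome constr M x ps)"
  have "upper_potential n (n - onemax ?y)
      \<le> upper_potential n j - (if hd ps \<in> zero_bits x then real n ^ 2 / real j else 0)"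
  proof (cases "hd ps \<in> zero_bits x")
    case True
    then have "onemax ?y = onemax x + 1"
      by (intro onemax_ia_step_outcome_hd_zero) (simp add: zero_bits_def)
    then have "n - onemax ?y = j - 1"
      using assms by arith
    then show ?thesis
      using True assms upper_potential_pred[of j n] by simp
  next
    case False
    have "onemax x \<le> onemax ?y"
      using onemax_ia_step_outcome by simp
    then have "n - onemax ?y \<le> j"
      using assms by arith
    then show ?thesis
      using False by (simp add: upper_potential_mono)
  qed
  then show ?thesis
    using evals_ia_step_outcome assms by simp
qed

lemma lower_potential_ia_step_outcome:
  assumes "length x = n" "n - onemax x = j"
  shows "real M + lower_potential n M j
      - (if hd ps \<in> zero_bits x \<or> reaches_zero (zero_bits x) 1 (tl ps)
         then real M + (lower_potential n M j - lower_potential n M (j - 1)) else 0)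
    \<le> real (snd (ia_step_outcome constr M x ps)) + lower_potential n M (n - onemax (fst (ia_step_outcome constr M x ps)))"
proof (cases "hd ps \<in> zero_bits x \<or> reaches_zero (zero_bits x) 1 (tl ps)")
  case True
  have "onemax (fst (ia_step_outcome constr M x ps)) \<le> onemax x + 1"
    using onemax_ia_step_outcome by simp
  then have "j - 1 \<le> n - onemax (fst (ia_step_outcome constr M x ps))"
    using assms by arith
  then have "lower_potential n M (j - 1)
      \<le> lower_potential n M (n - onemax (fst (ia_step_outcome constr M x ps)))"
    by (rule lower_potential_mono)
  then show ?thesis
    using True by simp
next
  case False
  then show ?thesis
    using ia_step_outcome_no_progress assms by simp
qed

end

lemma sum_if_const:
  assumes "finite S"
  shows "(\<Sum>s\<in>S. if P s then b else 0) = b * real (card {s \<in> S. P s})"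
  unfolding sum.inter_filter[OF assms, symmetric] by simp

context
  fixes constr :: "nat \<Rightarrow> nat \<Rightarrow> bool" and M n :: nat and x :: "bool list"
  assumes admissible: "admissible_constr constr" and M: "1 \<le> M" "M \<le> n"
    and x: "length x = n" "onemax x < n"
begin

private abbreviation outcome :: "nat list \<Rightarrow> bool list \<times> nat" where
  "outcome \<equiv> ia_step_outcome constr M x"

lemma flip_sequence_dlists: "ps \<in> dlists {0..<n} M \<Longrightarrow> flip_sequence constr M x ps"
  using admissible M x by unfold_locales auto

lemma sum_upper_potential_ia_step_outcome:
  "(\<Sum>ps\<in>dlists {0..<n} M. real (snd (outcome ps)) + upper_potential n (n - onemax (fst (outcome ps))))
     \<le> real (card (dlists {0..<n} M)) * upper_potential n (n - onemax x)"
proof -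
  define P where "P = dlists {0..<n} M"
  define j where "j = n - onemax x"
  have finP: "finite P"
    unfolding P_def by (simp add: finite_dlists)
  have j: "1 \<le> j" "card (zero_bits x) = j"
    using x card_zero_bits[of x] unfolding j_def by auto
  obtain K where K: "M = Suc K"
    using M by (cases M) auto
  have hd: "real (card {ps \<in> P. hd ps \<in> zero_bits x}) = real j / real n * real (card P)"
    using card_dlists_hd_mem[of "{0..<n}" "zero_bits x" K] zero_bits_subset[of x] x M j
    unfolding P_def K by simp
  have "(\<Sum>ps\<in>P. real (snd (outcome ps)) + upper_potential n (n - onemax (fst (outcome ps))))
      \<le> (\<Sum>ps\<in>P. (real n + upper_potential n j) - (if hd ps \<in> zero_bits x then real n ^ 2 / real j else 0))"
    using flip_sequence.upper_potential_ia_step_outcome[OF flip_sequence_dlists] x j M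
    unfolding P_def j_def by (intro sum_mono) auto
  also have "\<dots> = real (card P) * upper_potential n j"
    using j M unfolding sum_subtractf sum_if_const[OF finP] hd
    by (simp add: field_simps power2_eq_square)
  finally show ?thesis
    unfolding P_def j_def .
qed

lemma sum_lower_potential_ia_step_outcome:
  "real (card (dlists {0..<n} M)) * lower_potential n M (n - onemax x)
     \<le> (\<Sum>ps\<in>dlists {0..<n} M. real (snd (outcome ps)) + lower_potential n M (n - onemax (fst (outcome ps))))"
proof -
  define P where "P = dlists {0..<n} M"
  define j where "j = n - onemax x"
  define \<Delta> where "\<Delta> = lower_potential n M j - lower_potential n M (j - 1)"
  define E where "E = (\<lambda>ps. hd ps \<in> zero_bits x \<or> reaches_zero (zero_bits x) 1 (tl ps))"
  have finP: "finite P"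
    unfolding P_def by (simp add: finite_dlists)
  have j: "1 \<le> j" "card (zero_bits x) = j"
    using x card_zero_bits[of x] unfolding j_def by auto
  have "(real M + \<Delta>) * real (card {ps \<in> P. E ps}) \<le> real M * real (card P)"
  proof (cases "j \<le> n div 8")
    case True
    obtain K where K: "M = Suc K"
      using M by (cases M) auto
    have E: "real (card {ps \<in> P. E ps}) \<le> 4 * real j / real n * real (card P)"
      using card_dlists_hd_or_reaches_zero_le[of "{0..<n}" "zero_bits x" K] zero_bits_subset[of x] x True j
      unfolding P_def E_def K by simp
    have \<Delta>: "\<Delta> = real M * real n / 8 / real j"
      using lower_potential_pred[OF j(1) True] unfolding \<Delta>_def by simp
    have "(real M + \<Delta>) * real (card {ps \<in> P. E ps})
        \<le> (real M + \<Delta>) * (4 * real j / real n * real (card P))"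
      using E \<Delta> by (intro mult_left_mono) auto
    also have "\<dots> = (real M * (4 * real j / real n) + real M / 2) * real (card P)"
      using j x unfolding \<Delta> by (simp add: field_simps)
    also have "\<dots> \<le> (real M * (1 / 2) + real M / 2) * real (card P)"
    proof -
      have "8 * real j \<le> real n"
        using True by linarith
      then have "real M * (4 * real j / real n) \<le> real M * (1 / 2)"
        using j x by (intro mult_left_mono) (auto simp: field_simps)
      then show ?thesis
        by (intro mult_right_mono) auto
    qed
    finally show ?thesis
      by simp
  next
    case False
    then have "min j (n div 8) = n div 8" "min (j - 1) (n div 8) = n div 8"
      by auto
    then have "\<Delta> = 0"
      unfolding \<Delta>_def lower_potential_def by simp
    moreover have "card {ps \<in> P. E ps} \<le> card P"
      unfolding P_def by (intro card_mono finite_dlists) auto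
    ultimately show ?thesis
      by (simp add: mult_left_mono)
  qed
  then have "real (card P) * lower_potential n M j
      \<le> (\<Sum>ps\<in>P. real M + lower_potential n M j - (if E ps then real M + \<Delta> else 0))"
    unfolding sum_subtractf sum_if_const[OF finP]
    by (simp add: algebra_simps)
  also have "\<dots> \<le> (\<Sum>ps\<in>P. real (snd (outcome ps)) + lower_potential n M (n - onemax (fst (outcome ps))))"
    using flip_sequence.lower_potential_ia_step_outcome[OF flip_sequence_dlists] x
    unfolding P_def E_def \<Delta>_def j_def by (intro sum_mono) auto
  finally show ?thesis
    unfolding P_def j_def .
qed

end

section \<open>The run of the algorithm\<close>

lemma nn_integral_pmf_of_set_real:
  assumes "finite S" "S \<noteq> {}" "\<And>s. s \<in> S \<Longrightarrow> 0 \<le> f s"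
  shows "(\<integral>\<^sup>+s. ennreal (f s) \<partial>measure_pmf (pmf_of_set S)) = ennreal ((\<Sum>s\<in>S. f s) / real (card S))"
proof -
  have "(\<integral>\<^sup>+s. ennreal (f s) \<partial>measure_pmf (pmf_of_set S)) = (\<Sum>s\<in>S. ennreal (f s)) / of_nat (card S)"
    by (rule nn_integral_pmf_of_set[OF assms(2,1)])
  also have "\<dots> = ennreal ((\<Sum>s\<in>S. f s) / real (card S))"
    using assms by (simp add: ennreal_of_nat_eq_real_of_nat sum_nonneg card_gt_0_iff divide_ennreal)
  finally show ?thesis .
qed

abbreviation shifted_ia_step :: "(nat \<Rightarrow> nat \<Rightarrow> bool) \<Rightarrow> nat \<Rightarrow> bool list \<Rightarrow> nat \<Rightarrow> (bool list \<times> nat) pmf" where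
  "shifted_ia_step constr M x c \<equiv> map_pmf (\<lambda>(y, k). (y, c + k)) (ia_step constr onemax M x)"

lemma nn_integral_shifted_ia_step:
  assumes "M \<le> length x" "\<And>y k. 0 \<le> g y + real k"
  shows "(\<integral>\<^sup>+s. ennreal (real (snd s) + g (fst s)) \<partial>measure_pmf (shifted_ia_step constr M x c))
    = ennreal (real c + (\<Sum>ps\<in>dlists {0..<length x} M.
        real (snd (ia_step_outcome constr M x ps)) + g (fst (ia_step_outcome constr M x ps)))
        / real (card (dlists {0..<length x} M)))"
proof -
  define P where "P = dlists {0..<length x} M"
  have P: "finite P" "P \<noteq> {}"
    unfolding P_def using assms(1) by (simp_all add: finite_dlists dlists_atLeastLessThan_ne)
  have "(\<integral>\<^sup>+s. ennreal (real (snd s) + g (fst s)) \<partial>measure_pmf (shifted_ia_step constr M x c))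
      = (\<integral>\<^sup>+ps. ennreal (real c + (real (snd (ia_step_outcome constr M x ps))
          + g (fst (ia_step_outcome constr M x ps)))) \<partial>measure_pmf (pmf_of_set P))"
    unfolding ia_step_onemax_eq P_def by (simp add: split_beta add.assoc)
  also have "\<dots> = ennreal ((\<Sum>ps\<in>P. real c + (real (snd (ia_step_outcome constr M x ps))
          + g (fst (ia_step_outcome constr M x ps)))) / real (card P))"
    using P assms(2) by (intro nn_integral_pmf_of_set_real) (auto simp: add.commute add_nonneg_nonneg)
  also have "\<dots> = ennreal (real c + (\<Sum>ps\<in>P. real (snd (ia_step_outcome constr M x ps))
          + g (fst (ia_step_outcome constr M x ps))) / real (card P))"
    using P by (simp add: sum.distrib add_divide_distrib card_gt_0_iff)
  finally show ?thesis
    unfolding P_def .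
qed

context
  fixes constr :: "nat \<Rightarrow> nat \<Rightarrow> bool" and M n :: nat and x :: "bool list"
  assumes admissible: "admissible_constr constr" and M: "1 \<le> M" "M \<le> n"
    and x: "length x = n" "x \<noteq> replicate n True"
begin

lemma onemax_less: "onemax x < n"
  using x onemax_eq_length_iff[of x n] onemax_le_length[of x] by auto

lemma card_dlists_pos: "0 < real (card (dlists {0..<n} M))"
  using M by (simp add: finite_dlists dlists_atLeastLessThan_ne card_gt_0_iff)

lemma shifted_ia_step_upper_potential_drift:
  "(\<integral>\<^sup>+s. ennreal (real (snd s) + upper_potential n (n - onemax (fst s))) \<partial>measure_pmf (shifted_ia_step constr M x c))
    \<le> ennreal (real c + upper_potential n (n - onemax x))"
proof -
  have "(\<Sum>ps\<in>dlists {0..<n} M. real (snd (ia_step_outcome constr M x ps))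
      + upper_potential n (n - onemax (fst (ia_step_outcome constr M x ps))))
      / real (card (dlists {0..<n} M)) \<le> upper_potential n (n - onemax x)"
    using sum_upper_potential_ia_step_outcome[OF admissible M x(1) onemax_less] card_dlists_pos
    by (simp add: divide_le_eq mult.commute)
  then show ?thesis
    using M x upper_potential_nonneg
    by (subst nn_integral_shifted_ia_step) (auto intro!: ennreal_leI add_nonneg_nonneg simp del: ennreal_plus)
qed

lemma shifted_ia_step_lower_potential_drift:
  "ennreal (real c + lower_potential n M (n - onemax x))
    \<le> (\<integral>\<^sup>+s. ennreal (real (snd s) + lower_potential n M (n - onemax (fst s))) \<partial>measure_pmf (shifted_ia_step constr M x c))"
proof -
  have "lower_potential n M (n - onemax x) \<le> (\<Sum>ps\<in>dlists {0..<n} M. real (snd (ia_step_outcome constr M x ps))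
      + lower_potential n M (n - onemax (fst (ia_step_outcome constr M x ps))))
      / real (card (dlists {0..<n} M))"
    using sum_lower_potential_ia_step_outcome[OF admissible M x(1) onemax_less] card_dlists_pos
    by (simp add: le_divide_eq mult.commute)
  then show ?thesis
    using M x lower_potential_nonneg
    by (subst nn_integral_shifted_ia_step) (auto intro!: ennreal_leI add_nonneg_nonneg simp del: ennreal_plus)
qed

end

abbreviation onemax_run :: "(nat \<Rightarrow> nat \<Rightarrow> bool) \<Rightarrow> nat \<Rightarrow> nat \<Rightarrow> nat \<Rightarrow> (bool list \<times> nat) pmf" where
  "onemax_run constr n M t \<equiv> ia_run constr onemax (\<lambda>x. x = replicate n True) n M t"

lemma finite_bitstrings: "finite {x :: bool list. length x = n}"
  using finite_lists_length_eq[of "UNIV :: bool set" n] by simp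

lemma bitstrings_ne: "{x :: bool list. length x = n} \<noteq> {}"
proof -
  have "replicate n True \<in> {x. length x = n}"
    by simp
  then show ?thesis by blast
qed

lemma set_pmf_shifted_ia_step:
  "M \<le> length x \<Longrightarrow> set_pmf (shifted_ia_step constr M x c)
     = (\<lambda>ps. (fst (ia_step_outcome constr M x ps), c + snd (ia_step_outcome constr M x ps))) ` dlists {0..<length x} M"
  unfolding ia_step_onemax_eq by (auto simp: finite_dlists dlists_atLeastLessThan_ne split_beta)

lemma onemax_run_invariant:
  assumes "admissible_constr constr" "1 \<le> M" "M \<le> n" "s \<in> set_pmf (onemax_run constr n M t)"
  shows "length (fst s) = n \<and> (fst s \<noteq> replicate n True \<longrightarrow> Suc t \<le> snd s)"
  using assms(4)
proof (induction t arbitrary: s)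
  case 0
  then show ?case
    using finite_bitstrings bitstrings_ne by auto
next
  case (Suc t)
  then obtain x c where xc: "(x, c) \<in> set_pmf (onemax_run constr n M t)"
    and s: "s \<in> set_pmf (if x = replicate n True then return_pmf (x, c) else shifted_ia_step constr M x c)"
    by auto
  have x: "length x = n" "x \<noteq> replicate n True \<Longrightarrow> Suc t \<le> c"
    using Suc.IH[OF xc] by auto
  show ?case
  proof (cases "x = replicate n True")
    case False
    then obtain ps where ps: "ps \<in> dlists {0..<n} M"
      and s_eq: "s = (fst (ia_step_outcome constr M x ps), c + snd (ia_step_outcome constr M x ps))"
      using s set_pmf_shifted_ia_step x assms(3) by auto
    interpret flip_sequence constr M x ps
      using assms ps x by unfold_locales auto
    show ?thesis
      using s_eq length_ia_step_outcome evals_ia_step_outcome x False by simp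
  qed (use s x in simp)
qed

lemma nn_integral_onemax_run_Suc:
  "(\<integral>\<^sup>+s. f s \<partial>measure_pmf (onemax_run constr n M (Suc t)))
    = (\<integral>\<^sup>+s. (if fst s = replicate n True then f s
              else \<integral>\<^sup>+s'. f s' \<partial>measure_pmf (shifted_ia_step constr M (fst s) (snd s)))
         \<partial>measure_pmf (onemax_run constr n M t))"
proof -
  have return: "(\<integral>\<^sup>+s'. f s' \<partial>measure_pmf (return_pmf s)) = f s" for s
    by (simp add: return_pmf.rep_eq nn_integral_return)
  show ?thesis
    unfolding ia_run.simps nn_integral_bind_pmf
    by (intro nn_integral_cong) (auto simp: split_beta return)
qed

context
  fixes constr :: "nat \<Rightarrow> nat \<Rightarrow> bool" and M n :: nat and f :: "bool list \<times> nat \<Rightarrow> ennreal"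
  assumes admissible: "admissible_constr constr" and M: "1 \<le> M" "M \<le> n"
begin

lemma nn_integral_onemax_run_le_initial:
  assumes "\<And>x c. length x = n \<Longrightarrow> x \<noteq> replicate n True
    \<Longrightarrow> (\<integral>\<^sup>+s. f s \<partial>measure_pmf (shifted_ia_step constr M x c)) \<le> f (x, c)"
  shows "(\<integral>\<^sup>+s. f s \<partial>measure_pmf (onemax_run constr n M t)) \<le> (\<integral>\<^sup>+s. f s \<partial>measure_pmf (onemax_run constr n M 0))"
proof (induction t)
  case (Suc t)
  have "(\<integral>\<^sup>+s. f s \<partial>measure_pmf (onemax_run constr n M (Suc t))) \<le> (\<integral>\<^sup>+s. f s \<partial>measure_pmf (onemax_run constr n M t))"
    unfolding nn_integral_onemax_run_Suc
    using assms onemax_run_invariant[OF admissible M]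
    by (intro nn_integral_mono_AE AE_pmfI) (auto simp: split_beta)
  then show ?case
    using Suc.IH by order
qed simp

lemma nn_integral_onemax_run_ge_initial:
  assumes "\<And>x c. length x = n \<Longrightarrow> x \<noteq> replicate n True
    \<Longrightarrow> f (x, c) \<le> (\<integral>\<^sup>+s. f s \<partial>measure_pmf (shifted_ia_step constr M x c))"
  shows "(\<integral>\<^sup>+s. f s \<partial>measure_pmf (onemax_run constr n M 0)) \<le> (\<integral>\<^sup>+s. f s \<partial>measure_pmf (onemax_run constr n M t))"
proof (induction t)
  case (Suc t)
  have "(\<integral>\<^sup>+s. f s \<partial>measure_pmf (onemax_run constr n M t)) \<le> (\<integral>\<^sup>+s. f s \<partial>measure_pmf (onemax_run constr n M (Suc t)))"
    unfolding nn_integral_onemax_run_Suc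
    using assms onemax_run_invariant[OF admissible M]
    by (intro nn_integral_mono_AE AE_pmfI) (auto simp: split_beta)
  then show ?case
    using Suc.IH by order
qed simp

end

section \<open>Bounds on the expected runtime\<close>

lemma expected_runtime_onemax_le:
  assumes "admissible_constr constr" "1 \<le> M" "M \<le> n"
  shows "expected_runtime constr onemax (\<lambda>x. x = replicate n True) n M \<le> ennreal (1 + upper_potential n n)"
  unfolding expected_runtime_def
proof (rule SUP_least)
  fix t
  let ?f = "\<lambda>s. ennreal (real (snd s) + upper_potential n (n - onemax (fst s)))"
  have "(\<integral>\<^sup>+s. ennreal (real (snd s)) \<partial>measure_pmf (onemax_run constr n M t))
      \<le> (\<integral>\<^sup>+s. ?f s \<partial>measure_pmf (onemax_run constr n M t))"
    using upper_potential_nonneg by (intro nn_integral_mono ennreal_leI) auto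
  also have "\<dots> \<le> (\<integral>\<^sup>+s. ?f s \<partial>measure_pmf (onemax_run constr n M 0))"
    using shifted_ia_step_upper_potential_drift[OF assms]
    by (intro nn_integral_onemax_run_le_initial[OF assms]) auto
  also have "\<dots> = (\<integral>\<^sup>+x. ennreal (1 + upper_potential n (n - onemax x)) \<partial>measure_pmf (pmf_of_set {x :: bool list. length x = n}))"
    by simp
  also have "\<dots> \<le> (\<integral>\<^sup>+x. ennreal (1 + upper_potential n n) \<partial>measure_pmf (pmf_of_set {x :: bool list. length x = n}))"
    by (intro nn_integral_mono ennreal_leI) (simp add: upper_potential_mono)
  also have "\<dots> = ennreal (1 + upper_potential n n)"
    by (simp add: measure_pmf.emeasure_space_1)
  finally show "(\<integral>\<^sup>+s. ennreal (real (snd s)) \<partial>measure_pmf (onemax_run constr n M t)) \<le> ennreal (1 + upper_potential n n)" .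
qed

text \<open>Complementing all bits swaps zero-bits and one-bits, so at least half of all strings
  have at least \<open>n / 2\<close> zero-bits.\<close>
lemma card_bitstrings_le_twice_many_zeros:
  assumes "2 * L \<le> n"
  shows "card {x :: bool list. length x = n} \<le> 2 * card {x :: bool list. length x = n \<and> L \<le> n - onemax x}"
proof -
  define A where "A = {x :: bool list. length x = n \<and> L \<le> n - onemax x}"
  have "{x :: bool list. length x = n} \<subseteq> A \<union> map Not ` A"
  proof
    fix x :: "bool list"
    assume x: "x \<in> {x. length x = n}"
    show "x \<in> A \<union> map Not ` A"
    proof (cases "L \<le> n - onemax x")
      case False
      then have "map Not x \<in> A"
        using x onemax_map_Not[of x] onemax_le_length[of x] assms unfolding A_def by auto
      moreover have "x = map Not (map Not x)"
        by (simp add: comp_def)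
      ultimately show ?thesis by blast
    qed (use x A_def in simp)
  qed
  moreover have "finite A"
    unfolding A_def using finite_bitstrings[of n] by (rule finite_subset[rotated]) auto
  ultimately have "card {x :: bool list. length x = n} \<le> card A + card (map Not ` A)"
    by (meson card_Un_le card_mono finite_UnI finite_imageI order_trans)
  also have "\<dots> \<le> 2 * card A"
    using card_image_le[OF \<open>finite A\<close>, of "map Not"] by simp
  finally show ?thesis
    unfolding A_def .
qed

lemma nn_integral_initial_lower_potential:
  "ennreal (lower_potential n M n / 2)
    \<le> (\<integral>\<^sup>+x. ennreal (1 + lower_potential n M (n - onemax x)) \<partial>measure_pmf (pmf_of_set {x :: bool list. length x = n}))"
proof -
  define B where "B = lower_potential n M n"
  define S where "S = {x :: bool list. length x = n}"
  have S: "finite S" "S \<noteq> {}" "real (card S) > 0"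
    unfolding S_def using finite_bitstrings bitstrings_ne by (auto simp: card_gt_0_iff)
  have B: "0 \<le> B" "\<And>i. n div 8 \<le> i \<Longrightarrow> lower_potential n M i = B"
    unfolding B_def lower_potential_def by (auto simp: harm_nonneg min_def)
  have "card S \<le> 2 * card {x \<in> S. n div 8 \<le> n - onemax x}"
    using card_bitstrings_le_twice_many_zeros[of "n div 8" n] unfolding S_def
    by (simp add: Collect_conj_eq[symmetric])
  then have "real (card S) \<le> real (2 * card {x \<in> S. n div 8 \<le> n - onemax x})"
    by (rule of_nat_mono)
  then have "B * real (card S) / 2 \<le> B * real (card {x \<in> S. n div 8 \<le> n - onemax x})"
    using mult_left_mono[OF _ B(1)] by fastforce
  also have "\<dots> = (\<Sum>x\<in>S. if n div 8 \<le> n - onemax x then B else 0)"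
    by (simp add: sum_if_const[OF S(1)])
  also have "\<dots> \<le> (\<Sum>x\<in>S. 1 + lower_potential n M (n - onemax x))"
    using B lower_potential_nonneg by (intro sum_mono) (auto intro: add_nonneg_nonneg)
  finally have "B / 2 \<le> (\<Sum>x\<in>S. 1 + lower_potential n M (n - onemax x)) / real (card S)"
    using S by (simp add: divide_simps mult.commute)
  then show ?thesis
    using S lower_potential_nonneg unfolding B_def[symmetric] S_def[symmetric]
    by (subst nn_integral_pmf_of_set_real) (auto intro: add_nonneg_nonneg ennreal_leI)
qed

text \<open>Once \<open>t\<close> exceeds the maximal lower potential, every non-optimal state has spent more than
  \<open>t\<close> evaluations, while the optimum has potential zero.\<close>
lemma lower_potential_le_evals:
  assumes "admissible_constr constr" "1 \<le> M" "M \<le> n" "s \<in> set_pmf (onemax_run constr n M t)"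
    and "lower_potential n M n \<le> real (Suc t)"
  shows "lower_potential n M (n - onemax (fst s)) \<le> real (snd s)"
proof (cases "fst s = replicate n True")
  case True
  then show ?thesis
    by (simp add: onemax_def lower_potential_def harm_def)
next
  case False
  then have "Suc t \<le> snd s"
    using onemax_run_invariant[OF assms(1-4)] by simp
  then show ?thesis
    using lower_potential_mono[of "n - onemax (fst s)" n n M] assms(5) by simp
qed

lemma expected_runtime_onemax_ge:
  assumes "admissible_constr constr" "1 \<le> M" "M \<le> n"
  shows "ennreal (lower_potential n M n / 4) \<le> expected_runtime constr onemax (\<lambda>x. x = replicate n True) n M"
proof -
  define t where "t = nat \<lceil>lower_potential n M n\<rceil>"
  have t: "lower_potential n M n \<le> real (Suc t)"
    unfolding t_def by linarith
  let ?f = "\<lambda>s. ennreal (real (snd s) + lower_potential n M (n - onemax (fst s)))"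
  have "ennreal (lower_potential n M n / 2) \<le> (\<integral>\<^sup>+s. ?f s \<partial>measure_pmf (onemax_run constr n M 0))"
    using nn_integral_initial_lower_potential by simp
  also have "\<dots> \<le> (\<integral>\<^sup>+s. ?f s \<partial>measure_pmf (onemax_run constr n M t))"
    using shifted_ia_step_lower_potential_drift[OF assms]
    by (intro nn_integral_onemax_run_ge_initial[OF assms]) auto
  also have "\<dots> \<le> (\<integral>\<^sup>+s. 2 * ennreal (real (snd s)) \<partial>measure_pmf (onemax_run constr n M t))"
  proof (intro nn_integral_mono_AE AE_pmfI)
    fix s
    assume "s \<in> set_pmf (onemax_run constr n M t)"
    then have "lower_potential n M (n - onemax (fst s)) \<le> real (snd s)"
      using assms t by (intro lower_potential_le_evals) auto
    then have "?f s \<le> ennreal (2 * real (snd s))"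
      by (intro ennreal_leI) simp
    then show "?f s \<le> 2 * ennreal (real (snd s))"
      by (simp add: ennreal_mult)
  qed
  also have "\<dots> = 2 * (\<integral>\<^sup>+s. ennreal (real (snd s)) \<partial>measure_pmf (onemax_run constr n M t))"
    by (rule nn_integral_cmult) simp
  also have "\<dots> \<le> 2 * expected_runtime constr onemax (\<lambda>x. x = replicate n True) n M"
    unfolding expected_runtime_def by (intro mult_left_mono SUP_upper) auto
  finally have "ennreal (lower_potential n M n / 2) \<le> 2 * expected_runtime constr onemax (\<lambda>x. x = replicate n True) n M" .
  moreover have "ennreal (lower_potential n M n / 2) = ennreal 2 * ennreal (lower_potential n M n / 4)"
    using lower_potential_nonneg[of n M n] by (subst ennreal_mult[symmetric]) auto
  ultimately show ?thesis
    using ennreal_mult_le_mult_iff[of 2] by simp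
qed

lemma harm_le_one_plus_ln: "1 \<le> n \<Longrightarrow> harm n \<le> 1 + ln (real n)"
  using euler_mascheroni_sequence_decreasing[of 1 n] by (simp add: harm_def)

lemma one_le_ln: "3 \<le> x \<Longrightarrow> 1 \<le> ln (x :: real)"
  using exp_le ln_ge_iff[of x 1] by (simp add: order_trans)

lemma upper_potential_le_n_squared_ln:
  assumes "3 \<le> n"
  shows "1 + upper_potential n n \<le> 3 * (real n)\<^sup>2 * ln (real n)"
proof -
  have ln: "1 \<le> ln (real n)"
    using assms by (intro one_le_ln) simp
  have sq: "(real n)\<^sup>2 \<le> (real n)\<^sup>2 * ln (real n)"
    using ln by (simp add: mult_le_cancel_left1)
  moreover have "1 \<le> (real n)\<^sup>2"
    using assms by (simp add: one_le_power)
  ultimately have "1 + (real n)\<^sup>2 * (1 + ln (real n)) \<le> 3 * (real n)\<^sup>2 * ln (real n)"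
    by (simp add: algebra_simps)
  moreover have "upper_potential n n \<le> (real n)\<^sup>2 * (1 + ln (real n))"
    unfolding upper_potential_def using assms harm_le_one_plus_ln[of n] by (intro mult_left_mono) auto
  ultimately show ?thesis by simp
qed

lemma n_squared_ln_le_lower_potential:
  assumes "64 \<le> n" "real M = c * real n" "0 \<le> c"
  shows "c / 64 * (real n)\<^sup>2 * ln (real n) \<le> lower_potential n M n / 4"
proof -
  have "ln (real n) - ln 8 = ln (real n / 8)"
    using assms by (simp add: ln_div)
  also have "\<dots> \<le> ln (real (n div 8) + 1)"
    using assms by (subst ln_le_cancel_iff) linarith+
  also have "\<dots> \<le> harm (n div 8)"
    by (rule ln_le_harm)
  moreover have "2 * ln 8 = ln (64 :: real)"
    using ln_realpow[of 8 2] by simp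
  moreover have "ln 64 \<le> ln (real n)"
    using assms by simp
  ultimately have "ln (real n) / 2 \<le> harm (n div 8)"
    by simp
  then have "c * (real n)\<^sup>2 / 32 * (ln (real n) / 2) \<le> c * (real n)\<^sup>2 / 32 * harm (n div 8)"
    using assms by (intro mult_left_mono) auto
  then show ?thesis
    unfolding lower_potential_def using assms by (simp add: power2_eq_square)
qed

theorem expected_runtime_onemax_Theta:
  fixes c :: real
  assumes "admissible_constr constr" "0 < c" "c \<le> 1" "64 \<le> n" "real M = c * real n"
  shows "ennreal (c / 64 * (real n)\<^sup>2 * ln (real n)) \<le> expected_runtime constr onemax (\<lambda>x. x = replicate n True) n M
    \<and> expected_runtime constr onemax (\<lambda>x. x = replicate n True) n M \<le> ennreal (3 * (real n)\<^sup>2 * ln (real n))"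
proof -
  have "0 < real M" "real M \<le> real n"
    using assms mult_left_le_one_le[of "real n" c] by auto
  then have M: "1 \<le> M" "M \<le> n"
    by simp_all
  have "ennreal (c / 64 * (real n)\<^sup>2 * ln (real n)) \<le> ennreal (lower_potential n M n / 4)"
    using assms by (intro ennreal_leI n_squared_ln_le_lower_potential) auto
  also have "\<dots> \<le> expected_runtime constr onemax (\<lambda>x. x = replicate n True) n M"
    by (rule expected_runtime_onemax_ge[OF assms(1) M])
  finally show ?thesis
    using expected_runtime_onemax_le[OF assms(1) M] upper_potential_le_n_squared_ln[of n] assms
    by (auto intro: order_trans ennreal_leI)
qed

theorem theorem3:
  fixes c :: real
  assumes "0 < c" and "c \<le> 1"
  shows "\<exists>C1 C2 N. 0 < C1 \<and> 0 < C2 \<and>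
           (\<forall>n M. n \<ge> N \<longrightarrow> real M = c * real n \<longrightarrow>
              ennreal (C1 * (real n)\<^sup>2 * ln (real n)) \<le> ert_IA_gt_onemax n M \<and>
              ert_IA_gt_onemax n M \<le> ennreal (C2 * (real n)\<^sup>2 * ln (real n)) \<and>
              ennreal (C1 * (real n)\<^sup>2 * ln (real n)) \<le> ert_IA_ge_onemax n M \<and>
              ert_IA_ge_onemax n M \<le> ennreal (C2 * (real n)\<^sup>2 * ln (real n)))"
proof (intro exI conjI allI impI)
  show "0 < c / 64" "0 < (3 :: real)"
    using assms by simp_all
  fix n M :: nat
  assume "64 \<le> n" "real M = c * real n"
  then show "ennreal (c / 64 * (real n)\<^sup>2 * ln (real n)) \<le> ert_IA_gt_onemax n M"
    "ert_IA_gt_onemax n M \<le> ennreal (3 * (real n)\<^sup>2 * ln (real n))"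
    "ennreal (c / 64 * (real n)\<^sup>2 * ln (real n)) \<le> ert_IA_ge_onemax n M"
    "ert_IA_ge_onemax n M \<le> ennreal (3 * (real n)\<^sup>2 * ln (real n))"
    using expected_runtime_onemax_Theta[OF admissible_constr_greater assms]
      expected_runtime_onemax_Theta[OF admissible_constr_greater_eq assms]
    unfolding ert_IA_gt_onemax_def ert_IA_ge_onemax_def by auto
qed

end
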